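(* Let $A>0$ and let $F_k=(F_k^1,\dots,F_k^d)\in\mathbb{R}^d$, $k=1,2$, be constant vectors with $F_1^d>0$ and $F_2^d\ge0$. Define $$F(y)=\begin{cases}F_1,& y\in\Pi_1=\{y\in\mathbb{R}^d: y^d<A\},\\ F_2,& y\in\Pi_2=\{y\in\mathbb{R}^d: y^d\ge A\}.\end{cases}$$ Let $\Lambda\subset\Pi_1$ be the closure of an open connected set with piecewise smooth boundary. For $x\in\Lambda$ let $y(t,x)$ solve $\frac{d^2y}{dt^2}=F(y)$, $y(0,x)=x$, $\frac{dy}{dt}(0,x)=0$ (zero initial velocities). Then there are no collisions ($y(t,x_1)\ne y(t,x_2)$ for all $t\ge0$ and all $x_1\ne x_2$ in $\Lambda$) if and only if $F_1^d\le F_2^d$.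
   Context: $y^d$ denotes the $d$-th coordinate of $y\in\mathbb{R}^d$. *)

theory Defs
  imports "HOL-Analysis.Analysis"
begin

definition force :: "real \<Rightarrow> real^'n \<Rightarrow> real^'n \<Rightarrow> 'n \<Rightarrow> real^'n \<Rightarrow> real^'n" where
  "force A F1 F2 d z = (if z $ d < A then F1 else F2)"

text \<open>y(.,x) solves y'' = F(y), y(0)=x, y'(0)=0 on [0,inf): y is differentiable with continuous
  velocity v, and v has right derivative F(y(t)) at every t \<ge> 0 (the force is discontinuous,
  so only one-sided second derivatives exist at the crossing time).\<close>
definition solves_motion ::
  "real \<Rightarrow> real^'n \<Rightarrow> real^'n \<Rightarrow> 'n \<Rightarrow> (real \<Rightarrow> real^'n) \<Rightarrow> (real \<Rightarrow> real^'n) \<Rightarrow> real^'n \<Rightarrow> bool" where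
  "solves_motion A F1 F2 d y v x \<longleftrightarrow>
     y 0 = x \<and> v 0 = 0 \<and> continuous_on {0..} v \<and>
     (\<forall>t\<ge>0. (y has_vector_derivative v t) (at t within {0..}) \<and>
              (v has_vector_derivative force A F1 F2 d (y t)) (at_right t))"

end

theory Submission
  imports Defs
begin

text \<open>
  A particle released at rest from \<open>x\<close> falls with acceleration \<open>F\<^sub>1\<close> until its \<open>d\<close>-th coordinate
  reaches \<open>A\<close>, at the crossing time \<open>T\<close> with \<open>x\<^sup>d + F\<^sub>1\<^sup>d T\<^sup>2/2 = A\<close>; from then on its \<open>d\<close>-velocity
  is positive, so it stays in \<open>\<Pi>\<^sub>2\<close> and moves with acceleration \<open>F\<^sub>2\<close>. Hence every trajectory is
  \<open>x + D(T, t)\<close> with an explicit displacement \<open>D\<close> depending only on \<open>T\<close>.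
  If \<open>F\<^sub>1\<^sup>d \<le> F\<^sub>2\<^sup>d\<close>, the height reached at a fixed time strictly decreases with \<open>T\<close>, so
  particles starting at different heights never meet, and particles at equal height share \<open>T\<close>
  and are merely translated. If \<open>F\<^sub>1\<^sup>d > F\<^sub>2\<^sup>d\<close>, a particle crossing slightly later overtakes
  one crossing earlier; shifting its starting point sideways by a small amount (possible since
  the initial region has interior) makes the two particles meet.
\<close>

lemma right_derivative_zero_bound:
  fixes w :: "real \<Rightarrow> 'a::real_normed_vector"
  assumes "a \<le> b" and cont: "continuous_on {a..b} w"
    and der: "\<And>s. a \<le> s \<Longrightarrow> s < b \<Longrightarrow> (w has_vector_derivative 0) (at_right s)"
    and "\<epsilon> > 0"
  shows "norm (w b - w a) \<le> \<epsilon> * (b - a)"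
proof -
  define S where "S = {s\<in>{a..b}. norm (w s - w a) \<le> \<epsilon> * (s - a)}"
  have "S = {a..b} \<inter> (\<lambda>s. norm (w s - w a) - \<epsilon> * (s - a)) -` {..0}"
    unfolding S_def by auto
  moreover have "continuous_on {a..b} (\<lambda>s. norm (w s - w a) - \<epsilon> * (s - a))"
    by (intro continuous_intros cont)
  ultimately have "closed S" using continuous_closed_preimage by auto
  moreover have "a \<in> S" and bdd: "bdd_above S"
    using \<open>a \<le> b\<close> unfolding S_def by (auto intro: bdd_aboveI[of _ b])
  ultimately have "Sup S \<in> S" using closed_contains_Sup by blast
  define m where "m = Sup S"
  have "m = b"
  proof (rule ccontr)
    assume "m \<noteq> b"
    with \<open>Sup S \<in> S\<close> have m: "a \<le> m" "m < b" "norm (w m - w a) \<le> \<epsilon> * (m - a)"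
      unfolding m_def S_def by auto
    have "eventually (\<lambda>s. norm (w s - w m) \<le> \<epsilon> * norm (s - m)) (at_right m)"
      using der[OF m(1,2)] \<open>\<epsilon> > 0\<close>
      unfolding has_vector_derivative_def has_derivative_within_alt2 by simp
    moreover note eventually_at_right_less
    moreover have "eventually (\<lambda>s. s < b) (at_right m)"
      using \<open>m < b\<close> eventually_at_right_field by blast
    ultimately have "eventually (\<lambda>s. m < s \<and> s < b \<and> norm (w s - w m) \<le> \<epsilon> * (s - m))
        (at_right m)"
      by eventually_elim auto
    then obtain s where s: "m < s" "s < b" "norm (w s - w m) \<le> \<epsilon> * (s - m)"
      using eventually_happens' trivial_limit_at_right_real by blast
    then have "norm (w s - w a) \<le> \<epsilon> * (s - a)"
      using m norm_triangle_ineq[of "w s - w m" "w m - w a"] by (simp add: algebra_simps)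
    then have "s \<in> S" using s m unfolding S_def by auto
    then have "s \<le> m" unfolding m_def using bdd by (rule cSup_upper)
    then show False using s by simp
  qed
  then show ?thesis using \<open>Sup S \<in> S\<close> unfolding m_def S_def by auto
qed

lemma right_derivative_zero_imp_const:
  fixes w :: "real \<Rightarrow> 'a::real_normed_vector"
  assumes "a \<le> b" and "continuous_on {a..b} w"
    and "\<And>s. a \<le> s \<Longrightarrow> s < b \<Longrightarrow> (w has_vector_derivative 0) (at_right s)"
  shows "w b = w a"
proof -
  have "norm (w b - w a) \<le> \<epsilon>" if "\<epsilon> > 0" for \<epsilon>
  proof (cases "a = b")
    case False
    then have "norm (w b - w a) \<le> (\<epsilon> / (b - a)) * (b - a)"
      using assms that by (intro right_derivative_zero_bound) auto
    then show ?thesis using False by simp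
  qed (use that in simp)
  then show ?thesis using field_le_epsilon[of "norm (w b - w a)" 0] by simp
qed

lemma right_derivative_eq_imp_increment_eq:
  fixes g f :: "real \<Rightarrow> 'a::real_normed_vector"
  assumes "a \<le> b" and "continuous_on {a..b} g"
    and g': "\<And>s. a \<le> s \<Longrightarrow> s < b \<Longrightarrow> (g has_vector_derivative f' s) (at_right s)"
    and f': "\<And>s. (f has_vector_derivative f' s) (at s)"
  shows "g b - g a = f b - f a"
proof -
  have "continuous_on {a..b} f"
    using f' by (intro continuous_at_imp_continuous_on) (auto intro: has_vector_derivative_continuous)
  have "(\<lambda>s. g s - f s) b = (\<lambda>s. g s - f s) a"
  proof (rule right_derivative_zero_imp_const[OF \<open>a \<le> b\<close>])
    show "continuous_on {a..b} (\<lambda>s. g s - f s)"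
      using \<open>continuous_on {a..b} g\<close> \<open>continuous_on {a..b} f\<close> by (rule continuous_on_diff)
    fix s assume "a \<le> s" "s < b"
    from has_vector_derivative_diff[OF g'[OF this] has_vector_derivative_at_within[OF f']]
    show "((\<lambda>s. g s - f s) has_vector_derivative 0) (at_right s)" by simp
  qed
  then show ?thesis by (simp add: algebra_simps)
qed

lemma uniformly_accelerated_motion:
  fixes y v :: "real \<Rightarrow> 'a::real_normed_vector"
  assumes "T \<le> u" and "continuous_on {T..u} y" and "continuous_on {T..u} v"
    and y': "\<And>t. T \<le> t \<Longrightarrow> t < u \<Longrightarrow> (y has_vector_derivative v t) (at_right t)"
    and v': "\<And>t. T \<le> t \<Longrightarrow> t < u \<Longrightarrow> (v has_vector_derivative a) (at_right t)"
  shows "v u = v T + (u - T) *\<^sub>R a" and "y u = y T + (u - T) *\<^sub>R v T + ((u - T)\<^sup>2 / 2) *\<^sub>R a"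
proof -
  have v: "v s = v T + (s - T) *\<^sub>R a" if "T \<le> s" "s \<le> u" for s
  proof -
    have "v s - v T = (s - T) *\<^sub>R a - (T - T) *\<^sub>R a"
    proof (rule right_derivative_eq_imp_increment_eq[where f'="\<lambda>_. a"])
      show "continuous_on {T..s} v"
        using \<open>continuous_on {T..u} v\<close> by (rule continuous_on_subset) (use that in auto)
      show "(v has_vector_derivative a) (at_right t)" if "T \<le> t" "t < s" for t
        using v' that \<open>s \<le> u\<close> by simp
      show "((\<lambda>t. (t - T) *\<^sub>R a) has_vector_derivative a) (at t)" for t
        by (auto intro!: derivative_eq_intros)
    qed (rule that)
    then show ?thesis by (simp add: algebra_simps)
  qed
  then show "v u = v T + (u - T) *\<^sub>R a" using \<open>T \<le> u\<close> by blast
  have "y u - y T = ((u - T) *\<^sub>R v T + ((u - T)\<^sup>2 / 2) *\<^sub>R a)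
                    - ((T - T) *\<^sub>R v T + ((T - T)\<^sup>2 / 2) *\<^sub>R a)"
  proof (rule right_derivative_eq_imp_increment_eq[OF \<open>T \<le> u\<close> \<open>continuous_on {T..u} y\<close>])
    show "(y has_vector_derivative v T + (t - T) *\<^sub>R a) (at_right t)" if "T \<le> t" "t < u" for t
      using y'[OF that] v[of t] that by simp
    show "((\<lambda>t. (t - T) *\<^sub>R v T + ((t - T)\<^sup>2 / 2) *\<^sub>R a) has_vector_derivative
        v T + (t - T) *\<^sub>R a) (at t)" for t
      by (auto intro!: derivative_eq_intros)
  qed
  then show "y u = y T + (u - T) *\<^sub>R v T + ((u - T)\<^sup>2 / 2) *\<^sub>R a" by (simp add: algebra_simps)
qed

lemma real_induct_right:
  fixes P :: "real \<Rightarrow> bool"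
  assumes step: "\<And>s. a \<le> s \<Longrightarrow> (\<And>w. a \<le> w \<Longrightarrow> w < s \<Longrightarrow> P w) \<Longrightarrow>
      P s \<and> eventually P (at_right s)"
    and "a \<le> u"
  shows "P u"
proof (rule ccontr)
  assume "\<not> P u"
  define B where "B = {w. a \<le> w \<and> \<not> P w}"
  have B: "B \<noteq> {}" "bdd_below B"
    using \<open>a \<le> u\<close> \<open>\<not> P u\<close> unfolding B_def by (auto intro: bdd_belowI[of _ a])
  define s where "s = Inf B"
  have "a \<le> s" unfolding s_def B_def using B(1) by (auto intro: cInf_greatest simp: B_def)
  moreover have "P w" if "a \<le> w" "w < s" for w
    using that cInf_lower[OF _ B(2), of w] unfolding s_def B_def by force
  ultimately have "P s" and "eventually P (at_right s)" using step by blast+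
  then obtain b where "b > s" and b: "\<And>w. s < w \<Longrightarrow> w < b \<Longrightarrow> P w"
    unfolding eventually_at_right_field by blast
  then obtain w where "w \<in> B" "w < b" using cInf_lessD[OF B(1)] unfolding s_def by blast
  moreover have "s \<le> w" using \<open>w \<in> B\<close> cInf_lower[OF _ B(2)] unfolding s_def by blast
  ultimately show False using \<open>P s\<close> b unfolding B_def by (cases "w = s") auto
qed

lemma has_vector_derivative_component:
  fixes y :: "real \<Rightarrow> real^'n"
  assumes "(y has_vector_derivative y') F"
  shows "((\<lambda>t. y t $ i) has_real_derivative y' $ i) F"
  using bounded_linear.has_vector_derivative[OF bounded_linear_vec_nth assms]
  by (simp add: has_real_derivative_iff_has_vector_derivative)

lemma solves_motion_continuous:
  assumes "solves_motion A F1 F2 d y v x"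
  shows "continuous_on {0..} y"
  using assms unfolding solves_motion_def
  by (auto simp: continuous_on_eq_continuous_within intro: has_vector_derivative_continuous)

lemma solves_motion_constant_force:
  assumes sm: "solves_motion A F1 F2 d y v x" and "0 \<le> T" "T \<le> u"
    and F: "\<And>t. T \<le> t \<Longrightarrow> t < u \<Longrightarrow> force A F1 F2 d (y t) = F"
  shows "v u = v T + (u - T) *\<^sub>R F" and "y u = y T + (u - T) *\<^sub>R v T + ((u - T)\<^sup>2 / 2) *\<^sub>R F"
proof -
  have y': "(y has_vector_derivative v t) (at t within {0..})"
    and v': "(v has_vector_derivative force A F1 F2 d (y t)) (at_right t)" if "0 \<le> t" for t
    using sm that unfolding solves_motion_def by auto
  have "continuous_on {T..u} y"
    using solves_motion_continuous[OF sm] by (rule continuous_on_subset) (use \<open>0 \<le> T\<close> in auto)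
  moreover have "continuous_on {T..u} v"
    using sm \<open>0 \<le> T\<close> unfolding solves_motion_def by (auto intro: continuous_on_subset)
  moreover have "(y has_vector_derivative v t) (at_right t)" if "T \<le> t" for t
    using y' by (rule has_vector_derivative_within_subset) (use that \<open>0 \<le> T\<close> in auto)
  moreover have "(v has_vector_derivative F) (at_right t)" if "T \<le> t" "t < u" for t
    using v'[of t] F[OF that] that \<open>0 \<le> T\<close> by simp
  ultimately show "v u = v T + (u - T) *\<^sub>R F" "y u = y T + (u - T) *\<^sub>R v T + ((u - T)\<^sup>2 / 2) *\<^sub>R F"
    using uniformly_accelerated_motion[OF \<open>T \<le> u\<close>] by blast+
qed

lemma solves_motion_before_crossing:
  assumes sm: "solves_motion A F1 F2 d y v x" and "F1 $ d > 0"
    and cross: "x $ d + F1 $ d * T\<^sup>2 / 2 = A" and "0 \<le> t" "t \<le> T"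
  shows "v t = t *\<^sub>R F1" and "y t = x + (t\<^sup>2 / 2) *\<^sub>R F1"
proof -
  have free_fall: "v s = s *\<^sub>R F1 \<and> y s = x + (s\<^sup>2 / 2) *\<^sub>R F1"
    if "0 \<le> s" and below: "\<And>w. 0 \<le> w \<Longrightarrow> w < s \<Longrightarrow> y w $ d < A" for s
    using solves_motion_constant_force[OF sm order.refl \<open>0 \<le> s\<close>, of F1] below sm
    by (auto simp: force_def solves_motion_def)
  have "s < T \<longrightarrow> y s $ d < A" if "0 \<le> s" for s
  proof (rule real_induct_right[where P = "\<lambda>s. s < T \<longrightarrow> y s $ d < A", OF _ that])
    fix s :: real assume "0 \<le> s" and IH: "\<And>w. 0 \<le> w \<Longrightarrow> w < s \<Longrightarrow> w < T \<longrightarrow> y w $ d < A"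
    show "(s < T \<longrightarrow> y s $ d < A) \<and> eventually (\<lambda>s. s < T \<longrightarrow> y s $ d < A) (at_right s)"
    proof (cases "s < T")
      case True
      have "s\<^sup>2 < T\<^sup>2" using True \<open>0 \<le> s\<close> by (simp add: power_strict_mono)
      then have "F1 $ d * s\<^sup>2 < F1 $ d * T\<^sup>2" using \<open>F1 $ d > 0\<close> by simp
      moreover have "y s = x + (s\<^sup>2 / 2) *\<^sub>R F1"
        using free_fall[OF \<open>0 \<le> s\<close>] IH True by auto
      ultimately have "y s $ d < A" using cross by (simp add: algebra_simps)
      moreover have "((\<lambda>w. y w $ d) \<longlongrightarrow> y s $ d) (at s within {0..})"
        using solves_motion_continuous[OF sm] \<open>0 \<le> s\<close>
        by (intro tendsto_vec_nth) (simp add: continuous_on_def)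
      ultimately have "eventually (\<lambda>w. y w $ d < A) (at s within {0..})"
        by (rule order_tendstoD(2)[rotated])
      then have "eventually (\<lambda>w. y w $ d < A) (at_right s)"
        by (rule filter_leD[OF at_le, rotated]) (use \<open>0 \<le> s\<close> in auto)
      then show ?thesis using \<open>y s $ d < A\<close> by (auto elim: eventually_mono)
    next
      case False
      then show ?thesis
        using eventually_at_right_less[of s] by (auto elim: eventually_mono)
    qed
  qed
  then show "v t = t *\<^sub>R F1" "y t = x + (t\<^sup>2 / 2) *\<^sub>R F1"
    using free_fall[OF \<open>0 \<le> t\<close>] \<open>t \<le> T\<close> by auto
qed

lemma solves_motion_after_crossing:
  assumes sm: "solves_motion A F1 F2 d y v x" and "F1 $ d > 0" and "F2 $ d \<ge> 0"
    and "x $ d < A" and "0 \<le> T" and cross: "x $ d + F1 $ d * T\<^sup>2 / 2 = A" and "T \<le> t"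
  shows "y t = x + ((T * t - T\<^sup>2 / 2) *\<^sub>R F1 + ((t - T)\<^sup>2 / 2) *\<^sub>R F2)"
proof -
  have "T > 0" using \<open>0 \<le> T\<close> \<open>x $ d < A\<close> cross by (cases "T = 0") auto
  have vT: "v T = T *\<^sub>R F1" and yT: "y T = x + (T\<^sup>2 / 2) *\<^sub>R F1"
    using solves_motion_before_crossing[OF sm \<open>F1 $ d > 0\<close> cross \<open>0 \<le> T\<close>] by auto
  have flight: "v s = T *\<^sub>R F1 + (s - T) *\<^sub>R F2 \<and>
      y s = x + ((T * s - T\<^sup>2 / 2) *\<^sub>R F1 + ((s - T)\<^sup>2 / 2) *\<^sub>R F2)"
    if "T \<le> s" and above: "\<And>w. T \<le> w \<Longrightarrow> w < s \<Longrightarrow> A \<le> y w $ d" for s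
  proof -
    have "force A F1 F2 d (y w) = F2" if "T \<le> w" "w < s" for w
      using above[OF that] by (simp add: force_def)
    from solves_motion_constant_force[OF sm \<open>0 \<le> T\<close> \<open>T \<le> s\<close> this]
    have "v s = T *\<^sub>R F1 + (s - T) *\<^sub>R F2"
      and "y s = x + ((T\<^sup>2 / 2 + (s - T) * T) *\<^sub>R F1 + ((s - T)\<^sup>2 / 2) *\<^sub>R F2)"
      unfolding vT yT by (simp_all add: scaleR_add_left)
    moreover have "T\<^sup>2 / 2 + (s - T) * T = T * s - T\<^sup>2 / 2"
      by (simp add: power2_eq_square algebra_simps)
    ultimately show ?thesis by simp
  qed
  have "A \<le> y s $ d" if "T \<le> s" for s
  proof (rule real_induct_right[where P = "\<lambda>s. A \<le> y s $ d", OF _ that])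
    fix s :: real assume "T \<le> s" and IH: "\<And>w. T \<le> w \<Longrightarrow> w < s \<Longrightarrow> A \<le> y w $ d"
    obtain fv: "v s = T *\<^sub>R F1 + (s - T) *\<^sub>R F2"
      and fy: "y s = x + ((T * s - T\<^sup>2 / 2) *\<^sub>R F1 + ((s - T)\<^sup>2 / 2) *\<^sub>R F2)"
      using flight[OF \<open>T \<le> s\<close> IH] by blast
    have vs: "v s $ d = T * F1 $ d + (s - T) * F2 $ d" unfolding fv by simp
    have "y s $ d = x $ d + (T * s - T\<^sup>2 / 2) * F1 $ d + (s - T)\<^sup>2 / 2 * F2 $ d"
      unfolding fy by simp
    then have ys: "y s $ d = A + (s - T) * T * F1 $ d + (s - T)\<^sup>2 / 2 * F2 $ d"
      using cross by (simp add: power2_eq_square algebra_simps)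
    have "A \<le> y s $ d"
      unfolding ys using \<open>T \<le> s\<close> \<open>T > 0\<close> \<open>F1 $ d > 0\<close> \<open>F2 $ d \<ge> 0\<close> by simp
    \<comment> \<open>the \<open>d\<close>-velocity is positive, so the particle cannot fall back below \<open>A\<close>\<close>
    moreover have "0 < v s $ d"
      unfolding vs using \<open>T \<le> s\<close> \<open>T > 0\<close> \<open>F1 $ d > 0\<close> \<open>F2 $ d \<ge> 0\<close>
      by (simp add: add_pos_nonneg)
    moreover have "(y has_vector_derivative v s) (at s within {0..})"
      using sm \<open>0 < T\<close> \<open>T \<le> s\<close> unfolding solves_motion_def by simp
    then have "(y has_vector_derivative v s) (at_right s)"
      by (rule has_vector_derivative_within_subset) (use \<open>0 < T\<close> \<open>T \<le> s\<close> in auto)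
    then have "((\<lambda>w. y w $ d) has_real_derivative v s $ d) (at_right s)"
      by (rule has_vector_derivative_component)
    ultimately obtain \<delta> where "\<delta> > 0" "\<And>h. 0 < h \<Longrightarrow> h < \<delta> \<Longrightarrow> A \<le> y (s + h) $ d"
      using has_real_derivative_pos_inc_right by fastforce
    then have "eventually (\<lambda>w. A \<le> y w $ d) (at_right s)"
      unfolding eventually_at_right_field by (metis add.commute diff_add_cancel less_add_same_cancel1
          diff_less_eq)
    with \<open>A \<le> y s $ d\<close> show "A \<le> y s $ d \<and> eventually (\<lambda>w. A \<le> y w $ d) (at_right s)" ..
  qed
  then show ?thesis using flight[OF \<open>T \<le> t\<close>] by blast
qed

text \<open>Displacement at time \<open>t\<close> of a body released at rest that is accelerated by \<open>F1\<close> up to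
  time \<open>T\<close> and by \<open>F2\<close> afterwards.\<close>

definition switched_displacement :: "'a::real_vector \<Rightarrow> 'a \<Rightarrow> real \<Rightarrow> real \<Rightarrow> 'a" where
  "switched_displacement F1 F2 T t =
     (if t \<le> T then (t\<^sup>2 / 2) *\<^sub>R F1 else (T * t - T\<^sup>2 / 2) *\<^sub>R F1 + ((t - T)\<^sup>2 / 2) *\<^sub>R F2)"

lemma switched_displacement_after:
  assumes "T \<le> t"
  shows "switched_displacement F1 F2 T t = (T * t - T\<^sup>2 / 2) *\<^sub>R F1 + ((t - T)\<^sup>2 / 2) *\<^sub>R F2"
  using assms by (cases "t = T") (auto simp: switched_displacement_def power2_eq_square)

lemma switched_displacement_component [simp]:
  "switched_displacement F1 F2 T t $ i = switched_displacement (F1 $ i) (F2 $ i) T t"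
  by (simp add: switched_displacement_def)

lemma switched_displacement_diff:
  assumes "T0 \<le> T1" "T1 \<le> t"
  shows "switched_displacement F1 F2 T0 t - switched_displacement F1 F2 T1 t
       = ((T1 - T0) * (t - (T0 + T1) / 2)) *\<^sub>R (F2 - F1)"
proof -
  define k where "k = (T1 - T0) * (t - (T0 + T1) / 2)"
  have "switched_displacement F1 F2 T0 t - switched_displacement F1 F2 T1 t
      = ((T0 * t - T0\<^sup>2 / 2) - (T1 * t - T1\<^sup>2 / 2)) *\<^sub>R F1
        + ((t - T0)\<^sup>2 / 2 - (t - T1)\<^sup>2 / 2) *\<^sub>R F2"
    using assms by (simp add: switched_displacement_after scaleR_diff_left algebra_simps)
  also have "\<dots> = (- k) *\<^sub>R F1 + k *\<^sub>R F2"
  proof -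
    have "(T0 * t - T0\<^sup>2 / 2) - (T1 * t - T1\<^sup>2 / 2) = - k"
      and "(t - T0)\<^sup>2 / 2 - (t - T1)\<^sup>2 / 2 = k"
      unfolding k_def by (simp_all add: power2_eq_square field_simps)
    then show ?thesis by (simp only:)
  qed
  finally show ?thesis unfolding k_def by (simp add: scaleR_diff_right)
qed

lemma solves_motion_trajectory:
  assumes sm: "solves_motion A F1 F2 d y v x" and "F1 $ d > 0" and "F2 $ d \<ge> 0"
    and "x $ d < A" and "0 \<le> T" and cross: "x $ d + F1 $ d * T\<^sup>2 / 2 = A" and "0 \<le> t"
  shows "y t = x + switched_displacement F1 F2 T t"
proof (cases "t \<le> T")
  case True
  then show ?thesis
    using solves_motion_before_crossing[OF sm \<open>F1 $ d > 0\<close> cross \<open>0 \<le> t\<close>]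
    by (simp add: switched_displacement_def)
next
  case False
  then show ?thesis
    using solves_motion_after_crossing[OF assms(1-6)] by (simp add: switched_displacement_after)
qed

lemma crossing_time_exists:
  fixes c a A :: real
  assumes "c > 0" and "a < A"
  shows "\<exists>T\<ge>0. a + c * T\<^sup>2 / 2 = A"
proof (intro exI conjI)
  have "2 * (A - a) / c \<ge> 0" using assms by simp
  then show "sqrt (2 * (A - a) / c) \<ge> 0" and "a + c * (sqrt (2 * (A - a) / c))\<^sup>2 / 2 = A"
    using assms by (simp_all add: field_simps)
qed

lemma switched_displacement_height_less:
  fixes c e T1 T2 t :: real
  assumes "0 < c" and "c \<le> e" and "0 < T2" and "T2 < T1" and "0 \<le> t"
  shows "switched_displacement c e T1 t - c * T1\<^sup>2 / 2 < switched_displacement c e T2 t - c * T2\<^sup>2 / 2"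
proof -
  consider "t \<le> T2" | "T2 < t" "t \<le> T1" | "T1 < t" by linarith
  then show ?thesis
  proof cases
    case 1
    have "T2\<^sup>2 < T1\<^sup>2" using assms by (simp add: power_strict_mono)
    then show ?thesis using 1 assms by (simp add: switched_displacement_def)
  next
    case 2
    have "c * t\<^sup>2 \<le> c * T1\<^sup>2" using 2 assms by (simp add: power_mono)
    then have "switched_displacement c e T1 t - c * T1\<^sup>2 / 2 \<le> 0"
      using 2 by (simp add: switched_displacement_def mult.commute)
    also have "0 < c * T2 * (t - T2) + e * (t - T2)\<^sup>2 / 2"
      using 2 assms by (intro add_pos_nonneg) simp_all
    also have "\<dots> = switched_displacement c e T2 t - c * T2\<^sup>2 / 2"
      using 2 by (simp add: switched_displacement_def power2_eq_square algebra_simps)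
    finally show ?thesis .
  next
    case 3
    have "0 < c * (T1 + T2) / 2" using assms by simp
    also have "\<dots> = c * (T1 + T2 - t) + c / 2 * (2 * t - T1 - T2)"
      by (simp add: algebra_simps)
    also have "\<dots> \<le> c * (T1 + T2 - t) + e / 2 * (2 * t - T1 - T2)"
      using 3 assms by (intro add_left_mono mult_right_mono) auto
    finally have "0 < c * (T1 + T2 - t) + e / 2 * (2 * t - T1 - T2)" .
    then have "0 < (T1 - T2) * (c * (T1 + T2 - t) + e / 2 * (2 * t - T1 - T2))"
      using assms by simp
    also have "\<dots> = (switched_displacement c e T2 t - c * T2\<^sup>2 / 2)
        - (switched_displacement c e T1 t - c * T1\<^sup>2 / 2)"
      using 3 assms by (simp add: switched_displacement_def power2_eq_square field_simps)
    finally show ?thesis by simp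
  qed
qed

lemma switched_trajectory_height_less:
  fixes F1 F2 xa xb :: "real^'n"
  assumes "0 < F1 $ d" and "F1 $ d \<le> F2 $ d" and "xa $ d < xb $ d" and "xb $ d < A"
    and "0 \<le> Ta" and "0 \<le> Tb"
    and cross_a: "xa $ d + F1 $ d * Ta\<^sup>2 / 2 = A" and cross_b: "xb $ d + F1 $ d * Tb\<^sup>2 / 2 = A"
    and "0 \<le> t"
  shows "(xa + switched_displacement F1 F2 Ta t) $ d < (xb + switched_displacement F1 F2 Tb t) $ d"
proof -
  have "F1 $ d * Tb\<^sup>2 < F1 $ d * Ta\<^sup>2" using assms by linarith
  then have "Tb < Ta" using \<open>0 < F1 $ d\<close> \<open>0 \<le> Ta\<close> by (simp add: power_less_imp_less_base)
  moreover have "0 < Tb" using \<open>0 \<le> Tb\<close> \<open>xb $ d < A\<close> cross_b by (cases "Tb = 0") auto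
  ultimately show ?thesis
    using switched_displacement_height_less[of "F1 $ d" "F2 $ d" Tb Ta t] assms by simp
qed

lemma switched_trajectories_distinct:
  fixes F1 F2 x1 x2 :: "real^'n"
  assumes "0 < F1 $ d" and "F1 $ d \<le> F2 $ d" and "x1 $ d < A" and "x2 $ d < A"
    and "0 \<le> T1" and "0 \<le> T2"
    and "x1 $ d + F1 $ d * T1\<^sup>2 / 2 = A" and "x2 $ d + F1 $ d * T2\<^sup>2 / 2 = A"
    and "x1 \<noteq> x2" and "0 \<le> t"
  shows "x1 + switched_displacement F1 F2 T1 t \<noteq> x2 + switched_displacement F1 F2 T2 t"
proof -
  consider "x1 $ d < x2 $ d" | "x2 $ d < x1 $ d" | "x1 $ d = x2 $ d" by linarith
  then show ?thesis
  proof cases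
    case 3
    then have "F1 $ d * T1\<^sup>2 = F1 $ d * T2\<^sup>2" using assms by linarith
    then have "T1\<^sup>2 = T2\<^sup>2" using \<open>0 < F1 $ d\<close> by simp
    then have "T1 = T2" using \<open>0 \<le> T1\<close> \<open>0 \<le> T2\<close> power2_eq_iff_nonneg by blast
    then show ?thesis using \<open>x1 \<noteq> x2\<close> by simp
  qed (metis assms less_irrefl switched_trajectory_height_less)+
qed

lemma switched_displacement_collision:
  fixes F1 F2 x0 :: "real^'n"
  assumes "open U" and "x0 \<in> U" and "0 \<le> F2 $ d" and "F2 $ d < F1 $ d"
    and "0 \<le> T0" and cross: "x0 $ d + F1 $ d * T0\<^sup>2 / 2 = A"
  shows "\<exists>x1\<in>U. \<exists>T1\<ge>0. \<exists>t\<ge>0. x1 \<noteq> x0 \<and> x1 $ d + F1 $ d * T1\<^sup>2 / 2 = A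
    \<and> x1 + switched_displacement F1 F2 T1 t = x0 + switched_displacement F1 F2 T0 t"
proof -
  define c e where "c = F1 $ d" and "e = F2 $ d"
  \<comment> \<open>A particle crossing at \<open>T0 + \<delta>\<close> is level with one crossing at \<open>T0\<close> at time \<open>T0 + \<delta> + u \<delta>\<close>;
    \<open>\<Delta> \<delta>\<close> is the starting offset that makes the two positions coincide there.\<close>
  define u where "u \<delta> = (c * T0 + e * \<delta> / 2) / (c - e)" for \<delta>
  define \<Delta> where "\<Delta> \<delta> = (\<delta> * (u \<delta> + \<delta> / 2)) *\<^sub>R (F2 - F1)" for \<delta>
  have "((\<lambda>\<delta>. x0 + \<Delta> \<delta>) \<longlongrightarrow> x0 + \<Delta> 0) (at_right 0)"
    unfolding \<Delta>_def u_def by (intro tendsto_intros) (use assms in \<open>simp_all add: c_def e_def\<close>)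
  then have "eventually (\<lambda>\<delta>. x0 + \<Delta> \<delta> \<in> U) (at_right 0)"
    using assms(1,2) by (auto simp: \<Delta>_def elim: topological_tendstoD)
  then obtain b where "b > 0" and b: "\<And>\<delta>. 0 < \<delta> \<Longrightarrow> \<delta> < b \<Longrightarrow> x0 + \<Delta> \<delta> \<in> U"
    unfolding eventually_at_right_field by blast
  define \<delta> where "\<delta> = b / 2"
  have "0 < \<delta>" and "x0 + \<Delta> \<delta> \<in> U" using \<open>b > 0\<close> b unfolding \<delta>_def by auto
  have "0 \<le> u \<delta>" and u: "u \<delta> * (c - e) = c * T0 + e * \<delta> / 2"
    using assms \<open>0 < \<delta>\<close> unfolding u_def c_def e_def by auto
  have "\<Delta> \<delta> $ d = - (\<delta> * (u \<delta> * (c - e)) + \<delta>\<^sup>2 * (c - e) / 2)"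
    unfolding \<Delta>_def c_def e_def by (simp add: power2_eq_square field_simps)
  also have "\<dots> = - c * T0 * \<delta> - c * \<delta>\<^sup>2 / 2"
    unfolding u by (simp add: power2_eq_square field_simps)
  finally have \<Delta>d: "\<Delta> \<delta> $ d = - c * T0 * \<delta> - c * \<delta>\<^sup>2 / 2" .
  show ?thesis
  proof (intro bexI exI conjI)
    have "0 < c" using assms unfolding c_def e_def by simp
    then have "0 \<le> c * T0 * \<delta>" and "0 < c * \<delta>\<^sup>2"
      using \<open>0 < \<delta>\<close> \<open>0 \<le> T0\<close> by simp_all
    then have "\<Delta> \<delta> $ d < 0" unfolding \<Delta>d by simp
    then show "x0 + \<Delta> \<delta> \<noteq> x0" by auto
    show "(x0 + \<Delta> \<delta>) $ d + F1 $ d * (T0 + \<delta>)\<^sup>2 / 2 = A"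
      using \<Delta>d cross unfolding c_def by (simp add: power2_eq_square field_simps)
    have "switched_displacement F1 F2 T0 (T0 + \<delta> + u \<delta>) - switched_displacement F1 F2 (T0 + \<delta>) (T0 + \<delta> + u \<delta>)
        = \<Delta> \<delta>"
    proof -
      have "(T0 + \<delta> - T0) * (T0 + \<delta> + u \<delta> - (T0 + (T0 + \<delta>)) / 2) = \<delta> * (u \<delta> + \<delta> / 2)"
        by (simp add: field_simps)
      with switched_displacement_diff[of T0 "T0 + \<delta>" "T0 + \<delta> + u \<delta>" F1 F2]
      show ?thesis using \<open>0 < \<delta>\<close> \<open>0 \<le> u \<delta>\<close> unfolding \<Delta>_def by simp
    qed
    then show "x0 + \<Delta> \<delta> + switched_displacement F1 F2 (T0 + \<delta>) (T0 + \<delta> + u \<delta>)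
        = x0 + switched_displacement F1 F2 T0 (T0 + \<delta> + u \<delta>)"
      by (simp add: algebra_simps)
  qed (use \<open>x0 + \<Delta> \<delta> \<in> U\<close> \<open>0 < \<delta>\<close> \<open>0 \<le> u \<delta>\<close> \<open>0 \<le> T0\<close> in auto)
qed

theorem theorem6:
  fixes A :: real and F1 F2 :: "real^'n" and d :: 'n
    and U :: "(real^'n) set" and y v :: "real^'n \<Rightarrow> real \<Rightarrow> real^'n"
  assumes "A > 0" and "F1 $ d > 0" and "F2 $ d \<ge> 0"
    and "open U" and "connected U" and "U \<noteq> {}"
    and "closure U \<subseteq> {z. z $ d < A}"
    and "\<forall>x\<in>closure U. solves_motion A F1 F2 d (y x) (v x) x"
  shows "(\<forall>t\<ge>0. \<forall>x1\<in>closure U. \<forall>x2\<in>closure U. x1 \<noteq> x2 \<longrightarrow> y x1 t \<noteq> y x2 t)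
         \<longleftrightarrow> F1 $ d \<le> F2 $ d"
proof -
  have below: "x $ d < A" if "x \<in> closure U" for x using assms(7) that by auto
  have crossing: "\<exists>T\<ge>0. x $ d + F1 $ d * T\<^sup>2 / 2 = A" if "x \<in> closure U" for x
    using crossing_time_exists \<open>F1 $ d > 0\<close> below[OF that] by blast
  have trajectory: "y x t = x + switched_displacement F1 F2 T t"
    if "x \<in> closure U" "0 \<le> T" "x $ d + F1 $ d * T\<^sup>2 / 2 = A" "0 \<le> t" for x T t
    using solves_motion_trajectory assms(2,3,8) below that by blast
  show ?thesis
  proof
    assume no_collision: "\<forall>t\<ge>0. \<forall>x1\<in>closure U. \<forall>x2\<in>closure U. x1 \<noteq> x2 \<longrightarrow> y x1 t \<noteq> y x2 t"
    show "F1 $ d \<le> F2 $ d"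
    proof (rule ccontr)
      assume "\<not> F1 $ d \<le> F2 $ d"
      obtain x0 where "x0 \<in> U" using \<open>U \<noteq> {}\<close> by blast
      with crossing closure_subset obtain T0 where T0: "0 \<le> T0" "x0 $ d + F1 $ d * T0\<^sup>2 / 2 = A"
        by blast
      with switched_displacement_collision[OF \<open>open U\<close> \<open>x0 \<in> U\<close> \<open>F2 $ d \<ge> 0\<close>]
        \<open>\<not> F1 $ d \<le> F2 $ d\<close>
      obtain x1 T1 t where x1: "x1 \<in> U" "x1 \<noteq> x0" "0 \<le> T1" "0 \<le> t"
        "x1 $ d + F1 $ d * T1\<^sup>2 / 2 = A"
        "x1 + switched_displacement F1 F2 T1 t = x0 + switched_displacement F1 F2 T0 t"
        by (metis not_le)
      then have "y x1 t = y x0 t"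
        using trajectory T0 \<open>x0 \<in> U\<close> closure_subset by (metis subsetD)
      then show False using no_collision x1 \<open>x0 \<in> U\<close> closure_subset by blast
    qed
  next
    assume "F1 $ d \<le> F2 $ d"
    then show "\<forall>t\<ge>0. \<forall>x1\<in>closure U. \<forall>x2\<in>closure U. x1 \<noteq> x2 \<longrightarrow> y x1 t \<noteq> y x2 t"
      using switched_trajectories_distinct[OF \<open>F1 $ d > 0\<close>] crossing trajectory below by metis
  qed
qed

end
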